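(* Let $K\subseteq\mathbb{R}^n$, $\sigma>0$, $\varepsilon\in(0,1/2)$. Given the observed (possibly corrupted) data $X_1,\dots,X_N$ and $R>0$, define the random set $$S(R)=\Big\{\nu\in K:\ \sum_{i=1}^N\mathbb{1}\big(\|X_i-\nu\|>R\big)\le \frac N2-1\Big\}.$$ There exist an absolute constant $\gamma\in(0,1)$ and a constant $R_0$ depending only on $n,\sigma,\varepsilon$ such that for every $R\ge R_0$ (and every $\mu\in K$, every noise distribution in $\Xi_{\sigma^2}$ and every adversary) $$\mathbb{P}\big(\mu\notin S(R)\big)\le \exp\Big[-\frac{N(1/2-\varepsilon)\gamma}{16}\log\Big(1+\frac{R^2}{\sigma^2}\Big)\Big]\wedge\frac12 .$$
   Context: Model: the unknown mean $\mu$ lies in $K$. The uncorrupted sample is $\tilde X_i=\mu+\xi_i$, $i=1,\dots,N$, with $\xi_i$ i.i.d. copies of $\xi$ whose distribution belongs to $\Xi_{\sigma^2}$, the family of all distributions on $\mathbb{R}^n$ with mean zero and covariance $\Sigma\preceq\sigma^2 I$. An adversary, which may inspect the whole uncorrupted sample, replaces at most a fraction $\varepsilon$ of the points by arbitrary points, producing the observed data $X_1,\dots,X_N$. $\|\cdot\|$ is the Euclidean norm, $a\wedge b=\min(a,b)$. *)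

theory Defs
  imports "HOL-Probability.Probability"
begin

text \<open>Points of R^n are represented as functions nat => real whose relevant
coordinates are 0..n-1 (the carrier of the product measure below is the set of
extensional functions on {..<n}).  This explicit-carrier encoding lets the
dimension n be quantified inside the formula (needed since gamma is absolute).\<close>

definition Rn :: "nat \<Rightarrow> (nat \<Rightarrow> real) measure" where
  "Rn n = PiM {..<n} (\<lambda>_. lborel)"

definition enorm :: "nat \<Rightarrow> (nat \<Rightarrow> real) \<Rightarrow> real" where
  "enorm n x = sqrt (\<Sum>j<n. (x j)^2)"

definition mean_vec :: "(nat \<Rightarrow> real) measure \<Rightarrow> nat \<Rightarrow> real" where
  "mean_vec D j = (\<integral>x. x j \<partial>D)"

definition cov_mat :: "(nat \<Rightarrow> real) measure \<Rightarrow> nat \<Rightarrow> nat \<Rightarrow> real" where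
  "cov_mat D i j = (\<integral>x. (x i - mean_vec D i) * (x j - mean_vec D j) \<partial>D)"

text \<open>The family Xi_{s2}: distributions on R^n with mean zero and covariance
Sigma <= s2 * I (Loewner order), finite second moments assumed so that the
covariance exists.\<close>
definition Xi :: "nat \<Rightarrow> real \<Rightarrow> (nat \<Rightarrow> real) measure set" where
  "Xi n s2 = {D. prob_space D \<and> sets D = sets (Rn n) \<and>
     (\<forall>j<n. integrable D (\<lambda>x. x j) \<and> integrable D (\<lambda>x. (x j)^2) \<and> mean_vec D j = 0) \<and>
     (\<forall>v::nat \<Rightarrow> real. (\<Sum>i<n. \<Sum>j<n. v i * cov_mat D i j * v j) \<le> s2 * (\<Sum>j<n. (v j)^2))}"

text \<open>Uncorrupted sample: tilde X_i = mu + xi_i, i < N (0-based indices).\<close>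
definition clean_sample :: "nat \<Rightarrow> (nat \<Rightarrow> real) \<Rightarrow> (nat \<Rightarrow> nat \<Rightarrow> real) \<Rightarrow> nat \<Rightarrow> nat \<Rightarrow> real" where
  "clean_sample n \<mu> \<xi> = (\<lambda>i. restrict (\<lambda>j. \<mu> j + \<xi> i j) {..<n})"

definition adversary :: "nat \<Rightarrow> nat \<Rightarrow> real \<Rightarrow>
    ((nat \<Rightarrow> nat \<Rightarrow> real) \<Rightarrow> (nat \<Rightarrow> nat \<Rightarrow> real)) \<Rightarrow> bool" where
  "adversary n N \<epsilon> A \<longleftrightarrow>
     (\<forall>x. real (card {i\<in>{..<N}. \<exists>j<n. A x i j \<noteq> x i j}) \<le> \<epsilon> * real N)"

definition S_set :: "nat \<Rightarrow> (nat \<Rightarrow> real) set \<Rightarrow> nat \<Rightarrow> (nat \<Rightarrow> nat \<Rightarrow> real) \<Rightarrow> real \<Rightarrow> (nat \<Rightarrow> real) set" where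
  "S_set n K N X R = {\<nu>\<in>K. (\<Sum>i<N. if enorm n (\<lambda>j. X i j - \<nu> j) > R then 1 else 0 :: real) \<le> real N / 2 - 1}"

end

theory Submission
  imports Defs
begin

text \<open>
  If \<open>\<mu> \<notin> S(R)\<close>, more than \<open>N/2 - 1\<close>, hence at least \<open>N div 2\<close>, observed points lie
  farther than \<open>R\<close> from \<open>\<mu>\<close>. The adversary changed at most \<open>\<lfloor>\<epsilon>N\<rfloor>\<close> of them, so at
  least \<open>k = N div 2 - \<lfloor>\<epsilon>N\<rfloor> \<ge> 1\<close> clean noise vectors have norm \<open>> R\<close>. By Chebyshev each
  does so with probability \<open>q \<le> n\<sigma>\<^sup>2/R\<^sup>2\<close>, and a union bound over the \<open>k\<close>-subsets of
  indices bounds the event by \<open>(N choose k) q\<^sup>k\<close>. As \<open>N(1/2 - \<epsilon>) \<le> 2k\<close>, we have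
  \<open>(N choose k) \<le> 2\<^sup>N \<le> C\<^sup>k\<close> with \<open>C = 4 powr (1/(1/2 - \<epsilon>))\<close>, so the bound is at most
  \<open>p\<^sup>k\<close> with \<open>p = Cn\<sigma>\<^sup>2/R\<^sup>2\<close>. For \<open>R \<ge> 2\<sigma>(Cn + 1)\<close> we get \<open>p \<le> 1/2\<close> and
  \<open>p \<le> (1 + R\<^sup>2/\<sigma>\<^sup>2) powr (-1/2)\<close>, which yields the claim with \<open>\<gamma> = 1/2\<close>.
\<close>

lemma enorm_cong: "(\<And>j. j < n \<Longrightarrow> x j = y j) \<Longrightarrow> enorm n x = enorm n y"
  unfolding enorm_def by (intro arg_cong[where f = sqrt] sum.cong) auto

lemma enorm_squared: "(enorm n x)\<^sup>2 = (\<Sum>j<n. (x j)\<^sup>2)"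
  by (simp add: enorm_def sum_nonneg)

lemma quadratic_form_indicator:
  fixes c :: "nat \<Rightarrow> nat \<Rightarrow> real"
  assumes "j < n"
  shows "(\<Sum>i<n. \<Sum>l<n. of_bool (i = j) * c i l * of_bool (l = j)) = c j j"
  using assms by (simp add: Int_insert_left if_distrib[of "sum _"] cong: if_cong)

lemma Xi_coordinate_second_moment_le:
  assumes D: "D \<in> Xi n s2" and j: "j < n"
  shows "(\<integral>x. (x j)\<^sup>2 \<partial>D) \<le> s2"
proof -
  have cov: "(\<Sum>i<n. \<Sum>l<n. v i * cov_mat D i l * v l) \<le> s2 * (\<Sum>l<n. (v l)\<^sup>2)" for v
    using D by (simp add: Xi_def)
  have "(\<integral>x. (x j)\<^sup>2 \<partial>D) = cov_mat D j j"
    using D j by (simp add: Xi_def cov_mat_def power2_eq_square)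
  also have "\<dots> = (\<Sum>i<n. \<Sum>l<n. of_bool (i = j) * cov_mat D i l * of_bool (l = j))"
    by (rule quadratic_form_indicator[OF j, symmetric])
  also have "\<dots> \<le> s2 * (\<Sum>l<n. (of_bool (l = j))\<^sup>2)"
    by (rule cov)
  also have "\<dots> = s2"
    using j by (simp add: of_bool_def if_distrib[of "\<lambda>x. x\<^sup>2"] cong: if_cong)
  finally show ?thesis .
qed

lemma Xi_enorm_borel_measurable:
  assumes "D \<in> Xi n s2"
  shows "enorm n \<in> borel_measurable D"
proof -
  have [measurable]: "(\<lambda>x. x j) \<in> borel_measurable D" if "j < n" for j
    using assms that by (auto simp: Xi_def)
  show ?thesis
    unfolding enorm_def by measurable
qed

lemma Xi_enorm_tail_le:
  assumes D: "D \<in> Xi n s2" and R: "0 < R"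
  shows "measure D {x\<in>space D. R < enorm n x} \<le> real n * s2 / R\<^sup>2"
proof -
  interpret prob_space D
    using D by (simp add: Xi_def)
  have [measurable]: "enorm n \<in> borel_measurable D"
    using D by (rule Xi_enorm_borel_measurable)
  have square_integrable: "integrable D (\<lambda>x. (x j)\<^sup>2)" if "j < n" for j
    using D that by (simp add: Xi_def)
  have "measure D {x\<in>space D. R < enorm n x} \<le> measure D {x\<in>space D. R \<le> \<bar>enorm n x\<bar>}"
    by (rule finite_measure_mono) auto
  also have "\<dots> \<le> (\<integral>x. (enorm n x)\<^sup>2 \<partial>D) / R\<^sup>2"
    using R square_integrable by (intro second_moment_method) (auto simp: enorm_squared)
  also have "(\<integral>x. (enorm n x)\<^sup>2 \<partial>D) = (\<Sum>j<n. \<integral>x. (x j)\<^sup>2 \<partial>D)"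
    using square_integrable by (simp add: enorm_squared)
  also have "\<dots> \<le> real n * s2"
    using sum_mono[of "{..<n}" "\<lambda>j. \<integral>x. (x j)\<^sup>2 \<partial>D" "\<lambda>_. s2"]
      Xi_coordinate_second_moment_le[OF D] by simp
  finally show ?thesis
    using R by (simp add: divide_right_mono)
qed

lemma PiM_card_in_ge_eq_Union:
  assumes "finite I" and "G \<subseteq> space M"
  shows "{x \<in> space (PiM I (\<lambda>_. M)). k \<le> card {i\<in>I. x i \<in> G}} =
    (\<Union>J\<in>{J. J \<subseteq> I \<and> card J = k}. PiE I (\<lambda>i. if i \<in> J then G else space M))"
    (is "?L = ?R")
proof
  show "?L \<subseteq> ?R"
  proof
    fix x assume x: "x \<in> ?L"
    then have "k \<le> card {i\<in>I. x i \<in> G}"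
      by simp
    then obtain J where J: "J \<subseteq> {i\<in>I. x i \<in> G}" "card J = k" "finite J"
      by (rule obtain_subset_with_card_n)
    have "x \<in> PiE I (\<lambda>i. if i \<in> J then G else space M)"
      using x J(1) by (auto simp: space_PiM PiE_iff)
    then show "x \<in> ?R"
      using J by blast
  qed
  show "?R \<subseteq> ?L"
  proof
    fix x assume "x \<in> ?R"
    then obtain J where J: "J \<subseteq> I" "card J = k" and x: "x \<in> PiE I (\<lambda>i. if i \<in> J then G else space M)"
      by blast
    have "PiE I (\<lambda>i. if i \<in> J then G else space M) \<subseteq> space (PiM I (\<lambda>_. M))"
      unfolding space_PiM using assms(2) by (intro PiE_mono) auto
    moreover have "J \<subseteq> {i\<in>I. x i \<in> G}"
      using J(1) x by (fastforce simp: PiE_iff)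
    then have "k \<le> card {i\<in>I. x i \<in> G}"
      using J(2) assms(1) by (auto intro: card_mono)
    ultimately show "x \<in> ?L"
      using x by blast
  qed
qed

lemma
  assumes "prob_space M" and G: "G \<in> sets M" and I: "finite I"
  shows sets_PiM_card_in_ge: "{x \<in> space (PiM I (\<lambda>_. M)). k \<le> card {i\<in>I. x i \<in> G}} \<in> sets (PiM I (\<lambda>_. M))"
    and measure_PiM_card_in_ge_le:
      "measure (PiM I (\<lambda>_. M)) {x \<in> space (PiM I (\<lambda>_. M)). k \<le> card {i\<in>I. x i \<in> G}}
         \<le> real (card I choose k) * measure M G ^ k"
proof -
  interpret product_prob_space "\<lambda>_. M" I
    by (rule product_prob_spaceI) (rule assms(1))
  let ?F = "{J. J \<subseteq> I \<and> card J = k}"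
  let ?T = "\<lambda>J. PiE I (\<lambda>i. if i \<in> J then G else space M)"
  have event_eq: "{x \<in> space (PiM I (\<lambda>_. M)). k \<le> card {i\<in>I. x i \<in> G}} = (\<Union>J\<in>?F. ?T J)"
    using I sets.sets_into_space[OF G] by (rule PiM_card_in_ge_eq_Union)
  have finite_F: "finite ?F"
    using I by (auto intro: finite_subset[of _ "Pow I"])
  have T_sets: "?T J \<in> sets (PiM I (\<lambda>_. M))" for J
    using G I by (intro sets_PiM_I_finite) auto
  show "{x \<in> space (PiM I (\<lambda>_. M)). k \<le> card {i\<in>I. x i \<in> G}} \<in> sets (PiM I (\<lambda>_. M))"
    unfolding event_eq using finite_F T_sets by blast
  have T_measure: "measure (PiM I (\<lambda>_. M)) (?T J) = measure M G ^ k" if "J \<in> ?F" for J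
  proof -
    have "emeasure (PiM I (\<lambda>_. M)) (?T J) = (\<Prod>i\<in>I. emeasure M (if i \<in> J then G else space M))"
      using G I by (intro emeasure_PiM) auto
    also have "\<dots> = (\<Prod>i\<in>I. ennreal (if i \<in> J then measure M G else 1))"
      using G by (intro prod.cong) (auto simp: M.emeasure_eq_measure M.prob_space)
    also have "\<dots> = ennreal (measure M G ^ k)"
      using that I by (simp add: prod_ennreal prod.If_cases Int_absorb1 finite_subset)
    finally show ?thesis
      by (simp add: measure_def)
  qed
  have "measure (PiM I (\<lambda>_. M)) (\<Union>J\<in>?F. ?T J) \<le> (\<Sum>J\<in>?F. measure (PiM I (\<lambda>_. M)) (?T J))"
    using finite_F T_sets by (rule measure_UNION_le)
  also have "\<dots> = real (card I choose k) * measure M G ^ k"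
    using T_measure n_subsets[OF I, of k] by simp
  finally show "measure (PiM I (\<lambda>_. M)) {x \<in> space (PiM I (\<lambda>_. M)). k \<le> card {i\<in>I. x i \<in> G}}
      \<le> real (card I choose k) * measure M G ^ k"
    unfolding event_eq .
qed

lemma binomial_le_powr_pow:
  fixes a :: real
  assumes a: "0 < a" and Nk: "real N * a \<le> 2 * real k"
  shows "real (N choose k) \<le> (4 powr (1 / a)) ^ k"
proof -
  have "real (N choose k) \<le> 2 powr real N"
    using binomial_le_pow2[of N k] by (simp add: powr_realpow flip: of_nat_le_iff)
  also have "\<dots> \<le> 2 powr (2 * real k / a)"
    using a Nk by (intro powr_mono) (auto simp: field_simps)
  also have "\<dots> = (2 powr 2) powr (real k / a)"
    by (subst powr_powr) simp
  also have "\<dots> = (4 powr (1 / a)) ^ k"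
    by (simp add: powr_power powr_powr)
  finally show ?thesis .
qed

lemma ratio_le_half_and_sqrt_bound:
  fixes c s :: real
  assumes c: "0 \<le> c" and s: "2 * (c + 1) \<le> s"
  shows "c / s\<^sup>2 \<le> 1 / 2" and "c / s\<^sup>2 * sqrt (1 + s\<^sup>2) \<le> 1"
proof -
  have cs: "2 * c \<le> s" and s2: "2 \<le> s"
    using c s by (simp_all add: algebra_simps)
  have "1 * s \<le> s * s"
    using s2 by (intro mult_right_mono) auto
  then have "2 * c \<le> s\<^sup>2"
    using cs by (simp add: power2_eq_square)
  then show "c / s\<^sup>2 \<le> 1 / 2"
    using s2 by (simp add: field_simps)
  have "sqrt (1 + s\<^sup>2) \<le> sqrt ((1 + s)\<^sup>2)"
    using s2 by (intro real_sqrt_le_mono) (simp add: power2_eq_square algebra_simps)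
  also have "\<dots> = 1 + s"
    using s2 by simp
  finally have "c * sqrt (1 + s\<^sup>2) \<le> c * (1 + s)"
    using c by (rule mult_left_mono)
  also have "\<dots> \<le> (s / 2) * (2 * s)"
    using c cs s2 by (intro mult_mono) auto
  finally show "c / s\<^sup>2 * sqrt (1 + s\<^sup>2) \<le> 1"
    using s2 by (simp add: field_simps power2_eq_square)
qed

lemma power_le_exp_ln_of_sqrt_bound:
  fixes p t :: real
  assumes p: "0 \<le> p" and t: "0 \<le> t" and bound: "p * sqrt (1 + t) \<le> 1"
  shows "p ^ k \<le> exp (- (real k / 2) * ln (1 + t))"
proof -
  have "p \<le> (1 + t) powr - (1 / 2)"
    using t bound by (simp add: powr_minus_divide powr_half_sqrt field_simps)
  then have "p ^ k \<le> ((1 + t) powr - (1 / 2)) ^ k"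
    using p by (rule power_mono)
  also have "\<dots> = (1 + t) powr (- (real k / 2))"
    using t by (simp add: powr_power)
  also have "\<dots> = exp (- (real k / 2) * ln (1 + t))"
    using t by (simp add: powr_def)
  finally show ?thesis .
qed

lemma binomial_tail_le:
  fixes a q s :: real
  assumes a: "0 < a" and k: "1 \<le> k" and Nk: "real N * a \<le> 2 * real k"
    and q: "0 \<le> q" "q \<le> real n / s\<^sup>2" and s: "2 * (4 powr (1 / a) * real n + 1) \<le> s"
  shows "real (N choose k) * q ^ k \<le> min (exp (- (real N * a * (1/2) / 16) * ln (1 + s\<^sup>2))) (1/2)"
proof -
  define C where "C = 4 powr (1 / a)"
  define p where "p = C * real n / s\<^sup>2"
  have p_half: "p \<le> 1 / 2" and p_sqrt: "p * sqrt (1 + s\<^sup>2) \<le> 1"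
    using ratio_le_half_and_sqrt_bound[of "C * real n" s] s by (simp_all add: p_def C_def)
  have p0: "0 \<le> p"
    by (simp add: p_def C_def)
  have "real (N choose k) * q ^ k \<le> C ^ k * q ^ k"
    using binomial_le_powr_pow[OF a Nk] q(1) by (simp add: C_def mult_right_mono)
  also have "\<dots> = (C * q) ^ k"
    by (simp add: power_mult_distrib)
  also have "\<dots> \<le> p ^ k"
  proof (rule power_mono)
    have "C * q \<le> C * (real n / s\<^sup>2)"
      using q by (intro mult_left_mono) (auto simp: C_def)
    then show "C * q \<le> p"
      by (simp add: p_def)
    show "0 \<le> C * q"
      using q by (simp add: C_def)
  qed
  finally have bin_le: "real (N choose k) * q ^ k \<le> p ^ k" .
  have "p ^ k \<le> p ^ 1"
    using k p0 p_half by (intro power_decreasing) auto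
  then have half: "p ^ k \<le> 1 / 2"
    using p_half by simp
  have "real N * a * (1/2) / 16 \<le> real k / 2"
    using Nk of_nat_0_le_iff[of k] by linarith
  then have "real N * a * (1/2) / 16 * ln (1 + s\<^sup>2) \<le> real k / 2 * ln (1 + s\<^sup>2)"
    by (intro mult_right_mono) auto
  then have "exp (- (real k / 2) * ln (1 + s\<^sup>2)) \<le> exp (- (real N * a * (1/2) / 16) * ln (1 + s\<^sup>2))"
    by simp
  with p0 p_sqrt have "p ^ k \<le> exp (- (real N * a * (1/2) / 16) * ln (1 + s\<^sup>2))"
    by (blast intro: order_trans power_le_exp_ln_of_sqrt_bound zero_le_power2)
  with bin_le half show ?thesis
    by (blast intro: min.boundedI order_trans)
qed

lemma corrupted_fraction_count_bounds:
  fixes \<epsilon> :: real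
  assumes \<epsilon>: "0 \<le> \<epsilon>" and corrupt: "real_of_int \<lfloor>\<epsilon> * real N\<rfloor> \<le> real N / 2 - 1"
  shows "1 \<le> N div 2 - nat \<lfloor>\<epsilon> * real N\<rfloor>"
    and "real N * (1/2 - \<epsilon>) \<le> 2 * real (N div 2 - nat \<lfloor>\<epsilon> * real N\<rfloor>)"
proof -
  define m where "m = nat \<lfloor>\<epsilon> * real N\<rfloor>"
  have m: "real m = real_of_int \<lfloor>\<epsilon> * real N\<rfloor>"
    using \<epsilon> by (simp add: m_def)
  have "real (2 * m + 2) \<le> real N"
    using corrupt m by simp
  then have "2 * m + 2 \<le> N"
    by (simp only: of_nat_le_iff)
  then show k: "1 \<le> N div 2 - m"
    by linarith
  have "real N \<le> 2 * real (N div 2) + 1"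
    by linarith
  moreover have "real m \<le> \<epsilon> * real N"
    using m by linarith
  ultimately show "real N * (1/2 - \<epsilon>) \<le> 2 * real (N div 2 - m)"
    using k by (simp add: of_nat_diff algebra_simps)
qed

lemma card_far_ge_of_notin_S_set:
  assumes "\<nu> \<in> K" and "\<nu> \<notin> S_set n K N X R"
  shows "N \<le> 2 * card {i\<in>{..<N}. R < enorm n (\<lambda>j. X i j - \<nu> j)} + 1"
proof -
  have "(\<Sum>i<N. if R < enorm n (\<lambda>j. X i j - \<nu> j) then 1 else 0 :: real)
      = real (card {i\<in>{..<N}. R < enorm n (\<lambda>j. X i j - \<nu> j)})"
    by (simp add: sum.If_cases Int_def)
  moreover have "\<not> (\<Sum>i<N. if R < enorm n (\<lambda>j. X i j - \<nu> j) then 1 else 0 :: real) \<le> real N / 2 - 1"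
    using assms by (simp add: S_set_def)
  ultimately have "real N < real (2 * card {i\<in>{..<N}. R < enorm n (\<lambda>j. X i j - \<nu> j)} + 2)"
    by simp
  then show ?thesis
    by linarith
qed

lemma far_subset_clean_far_Un_corrupted:
  "{i\<in>{..<N}. R < enorm n (\<lambda>j. X i j - \<mu> j)}
     \<subseteq> {i\<in>{..<N}. R < enorm n (\<xi> i)} \<union> {i\<in>{..<N}. \<exists>j<n. X i j \<noteq> clean_sample n \<mu> \<xi> i j}"
proof
  fix i assume i: "i \<in> {i\<in>{..<N}. R < enorm n (\<lambda>j. X i j - \<mu> j)}"
  show "i \<in> {i\<in>{..<N}. R < enorm n (\<xi> i)} \<union> {i\<in>{..<N}. \<exists>j<n. X i j \<noteq> clean_sample n \<mu> \<xi> i j}"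
  proof (cases "\<exists>j<n. X i j \<noteq> clean_sample n \<mu> \<xi> i j")
    case False
    then have "enorm n (\<lambda>j. X i j - \<mu> j) = enorm n (\<xi> i)"
      by (intro enorm_cong) (simp add: clean_sample_def)
    with i show ?thesis
      by simp
  qed (use i in simp)
qed

lemma card_clean_far_ge:
  assumes adv: "adversary n N \<epsilon> A" and "\<mu> \<in> K" and "\<mu> \<notin> S_set n K N (A (clean_sample n \<mu> \<xi>)) R"
  shows "N div 2 - nat \<lfloor>\<epsilon> * real N\<rfloor> \<le> card {i\<in>{..<N}. R < enorm n (\<xi> i)}"
proof -
  let ?X = "A (clean_sample n \<mu> \<xi>)"
  let ?far = "{i\<in>{..<N}. R < enorm n (\<lambda>j. ?X i j - \<mu> j)}"
  let ?clean_far = "{i\<in>{..<N}. R < enorm n (\<xi> i)}"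
  let ?corrupted = "{i\<in>{..<N}. \<exists>j<n. ?X i j \<noteq> clean_sample n \<mu> \<xi> i j}"
  have far: "N \<le> 2 * card ?far + 1"
    using assms(2,3) by (rule card_far_ge_of_notin_S_set)
  have "real (card ?corrupted) \<le> \<epsilon> * real N"
    using adv by (simp add: adversary_def)
  then have corrupted: "card ?corrupted \<le> nat \<lfloor>\<epsilon> * real N\<rfloor>"
    by (simp add: le_nat_iff le_floor_iff)
  have "card ?far \<le> card (?clean_far \<union> ?corrupted)"
    by (intro card_mono far_subset_clean_far_Un_corrupted) auto
  also have "\<dots> \<le> card ?clean_far + card ?corrupted"
    by (rule card_Un_le)
  finally show ?thesis
    using far corrupted by linarith
qed

lemma notin_S_set_event_subset:
  assumes adv: "adversary n N \<epsilon> A" and \<mu>: "\<mu> \<in> K"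
  shows "{\<xi> \<in> space (PiM {..<N} (\<lambda>_. D)). \<mu> \<notin> S_set n K N (A (clean_sample n \<mu> \<xi>)) R}
    \<subseteq> {\<xi> \<in> space (PiM {..<N} (\<lambda>_. D)).
         N div 2 - nat \<lfloor>\<epsilon> * real N\<rfloor> \<le> card {i\<in>{..<N}. \<xi> i \<in> {x \<in> space D. R < enorm n x}}}"
proof safe
  fix \<xi> assume \<xi>: "\<xi> \<in> space (PiM {..<N} (\<lambda>_. D))"
    and notin: "\<mu> \<notin> S_set n K N (A (clean_sample n \<mu> \<xi>)) R"
  have "N div 2 - nat \<lfloor>\<epsilon> * real N\<rfloor> \<le> card {i\<in>{..<N}. R < enorm n (\<xi> i)}"
    using adv \<mu> notin by (rule card_clean_far_ge)
  also have "{i\<in>{..<N}. R < enorm n (\<xi> i)} = {i\<in>{..<N}. \<xi> i \<in> {x \<in> space D. R < enorm n x}}"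
    using \<xi> by (auto simp: space_PiM)
  finally show "N div 2 - nat \<lfloor>\<epsilon> * real N\<rfloor> \<le> card {i\<in>{..<N}. \<xi> i \<in> {x \<in> space D. R < enorm n x}}" .
qed

lemma notin_S_set_event_bound:
  fixes \<sigma> \<epsilon> R :: real
  assumes \<sigma>: "0 < \<sigma>" and \<epsilon>: "0 < \<epsilon>" "\<epsilon> < 1/2"
    and R: "2 * \<sigma> * (4 powr (1 / (1/2 - \<epsilon>)) * real n + 1) \<le> R"
    and \<mu>: "\<mu> \<in> K" and D: "D \<in> Xi n (\<sigma>\<^sup>2)" and adv: "adversary n N \<epsilon> A"
    and corrupt: "real_of_int \<lfloor>\<epsilon> * real N\<rfloor> \<le> real N / 2 - 1"
  shows "\<exists>B \<in> sets (PiM {..<N} (\<lambda>_. D)).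
           {\<xi> \<in> space (PiM {..<N} (\<lambda>_. D)). \<mu> \<notin> S_set n K N (A (clean_sample n \<mu> \<xi>)) R} \<subseteq> B \<and>
           measure (PiM {..<N} (\<lambda>_. D)) B \<le>
             min (exp (- (real N * (1/2 - \<epsilon>) * (1/2) / 16) * ln (1 + R\<^sup>2 / \<sigma>\<^sup>2))) (1/2)"
proof -
  have prob_D: "prob_space D"
    using D by (simp add: Xi_def)
  have "0 < 2 * \<sigma> * (4 powr (1 / (1/2 - \<epsilon>)) * real n + 1)"
    using \<sigma> by (simp add: add_nonneg_pos)
  with R have R_pos: "0 < R"
    by linarith
  define G where "G = {x \<in> space D. R < enorm n x}"
  define k where "k = N div 2 - nat \<lfloor>\<epsilon> * real N\<rfloor>"
  define B where "B = {\<xi> \<in> space (PiM {..<N} (\<lambda>_. D)). k \<le> card {i\<in>{..<N}. \<xi> i \<in> G}}"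
  have G_sets: "G \<in> sets D"
    using Xi_enorm_borel_measurable[OF D] unfolding G_def by measurable
  show ?thesis
  proof (intro bexI conjI)
    show "B \<in> sets (PiM {..<N} (\<lambda>_. D))"
      unfolding B_def using prob_D G_sets by (rule sets_PiM_card_in_ge) simp
    show "{\<xi> \<in> space (PiM {..<N} (\<lambda>_. D)). \<mu> \<notin> S_set n K N (A (clean_sample n \<mu> \<xi>)) R} \<subseteq> B"
      unfolding B_def G_def k_def using adv \<mu> by (rule notin_S_set_event_subset)
    have "measure (PiM {..<N} (\<lambda>_. D)) B \<le> real (N choose k) * measure D G ^ k"
      unfolding B_def using measure_PiM_card_in_ge_le[OF prob_D G_sets, of "{..<N}" k] by simp
    also have "\<dots> \<le> min (exp (- (real N * (1/2 - \<epsilon>) * (1/2) / 16) * ln (1 + (R / \<sigma>)\<^sup>2))) (1/2)"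
    proof (rule binomial_tail_le)
      show "measure D G \<le> real n / (R / \<sigma>)\<^sup>2"
        using Xi_enorm_tail_le[OF D R_pos] \<sigma> by (simp add: G_def power_divide)
      show "2 * (4 powr (1 / (1/2 - \<epsilon>)) * real n + 1) \<le> R / \<sigma>"
        using R \<sigma> by (simp add: pos_le_divide_eq algebra_simps)
    qed (use \<epsilon> corrupt corrupted_fraction_count_bounds[of \<epsilon> N] in \<open>simp_all add: k_def\<close>)
    finally show "measure (PiM {..<N} (\<lambda>_. D)) B
        \<le> min (exp (- (real N * (1/2 - \<epsilon>) * (1/2) / 16) * ln (1 + R\<^sup>2 / \<sigma>\<^sup>2))) (1/2)"
      by (simp add: power_divide)
  qed
qed

theorem mainTheorem5:
  shows "\<exists>\<gamma>::real. 0 < \<gamma> \<and> \<gamma> < 1 \<and>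
    (\<forall>(n::nat) (\<sigma>::real) (\<epsilon>::real). 0 < \<sigma> \<and> 0 < \<epsilon> \<and> \<epsilon> < 1/2 \<longrightarrow>
      (\<exists>R0::real. \<forall>(R::real) (K::(nat \<Rightarrow> real) set) (N::nat) (\<mu>::nat \<Rightarrow> real)
          (D::(nat \<Rightarrow> real) measure) (A::(nat \<Rightarrow> nat \<Rightarrow> real) \<Rightarrow> (nat \<Rightarrow> nat \<Rightarrow> real)).
        R \<ge> R0 \<and> 0 < R \<and> K \<subseteq> space (Rn n) \<and> \<mu> \<in> K \<and> D \<in> Xi n (\<sigma>^2) \<and>
        adversary n N \<epsilon> A \<and> real_of_int \<lfloor>\<epsilon> * real N\<rfloor> \<le> real N / 2 - 1 \<longrightarrow>
        (\<exists>B \<in> sets (PiM {..<N} (\<lambda>_. D)).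
           {\<xi> \<in> space (PiM {..<N} (\<lambda>_. D)). \<mu> \<notin> S_set n K N (A (clean_sample n \<mu> \<xi>)) R} \<subseteq> B \<and>
           measure (PiM {..<N} (\<lambda>_. D)) B \<le>
             min (exp (- (real N * (1/2 - \<epsilon>) * \<gamma> / 16) * ln (1 + R^2 / \<sigma>^2))) (1/2))))"
  apply (rule exI[of _ "1/2"], intro conjI allI impI)
  subgoal by simp
  subgoal by simp
  subgoal for n \<sigma> \<epsilon>
    by (rule exI[of _ "2 * \<sigma> * (4 powr (1 / (1/2 - \<epsilon>)) * real n + 1)"])
      (use notin_S_set_event_bound[of \<sigma> \<epsilon> n] in blast)
  done

end
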